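(* Let $A\in\mathbb Z^{d\times n}$ with $\ker(A)\cap\mathbb N^n=\{0\}$ and let $B\subseteq\ker(A)$ be any subset. Then $B$ is distance reducing if and only if $B$ reduces the distance of the Graver basis $G(A)$. Similarly, $B$ is strongly distance reducing if and only if $B$ strongly reduces the distance of $G(A)$.
   Context: For $z\in\mathbb Z^n$, $z^\pm\in\mathbb N^n$ are the unique vectors with disjoint supports and $z=z^+-z^-$; $\|\cdot\|$ is the $1$-norm. The Graver basis $G(A)$ is the set of nonzero $z\in\ker(A)$ admitting no decomposition $z=u+v$ with $u,v\in\ker(A)\setminus\{0\}$, $z^+=u^++v^+$, $z^-=u^-+v^-$. For nonzero $z\in\ker(A)$ and $u\in\ker(A)$: $u$ reduces $z$ from $z^+$ if there is $\varepsilon\in\{\pm1\}$ with $z^++\varepsilon u\in\mathbb N^n$ and $\|z^++\varepsilon u-z^-\|<\|z\|$; $u$ reduces $z$ from $z^-$ if there is $\varepsilon$ with $z^-+\varepsilon u\in\mathbb N^n$ and $\|z^+-(z^-+\varepsilon u)\|<\|z\|$. $B$ reduces the distance of $Z$ if every nonzero $z\in Z$ is reduced (from $z^+$ or from $z^-$) by some $u\in B$; $B$ strongly reduces the distance of $Z$ if every nonzero $z\in Z$ is reduced from $z^+$ by some $u\in B$ and from $z^-$ by some (possibly different) $u'\in B$. $B$ is (strongly) distance reducing if it (strongly) reduces the distance of $\ker(A)$. *)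

theory Defs
  imports Main "HOL-Library.Function_Algebras"
begin

text \<open>Integer vectors of length n are modelled as functions nat => int that vanish
outside {..<n}; a d x n integer matrix A is a function nat => nat => int with A r i the
entry in row r < d and column i < n.\<close>

definition vecs :: "nat \<Rightarrow> (nat \<Rightarrow> int) set" where
  "vecs n = {z. \<forall>i\<ge>n. z i = 0}"

definition kerA :: "nat \<Rightarrow> nat \<Rightarrow> (nat \<Rightarrow> nat \<Rightarrow> int) \<Rightarrow> (nat \<Rightarrow> int) set" where
  "kerA d n A = {z \<in> vecs n. \<forall>r<d. (\<Sum>i<n. A r i * z i) = 0}"

definition natvec :: "(nat \<Rightarrow> int) \<Rightarrow> bool" where
  "natvec z \<longleftrightarrow> (\<forall>i. 0 \<le> z i)"

definition pospart :: "(nat \<Rightarrow> int) \<Rightarrow> nat \<Rightarrow> int" where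
  "pospart z = (\<lambda>i. max (z i) 0)"

definition negpart :: "(nat \<Rightarrow> int) \<Rightarrow> nat \<Rightarrow> int" where
  "negpart z = (\<lambda>i. max (- z i) 0)"

definition norm1 :: "nat \<Rightarrow> (nat \<Rightarrow> int) \<Rightarrow> int" where
  "norm1 n z = (\<Sum>i<n. \<bar>z i\<bar>)"

definition graver :: "nat \<Rightarrow> nat \<Rightarrow> (nat \<Rightarrow> nat \<Rightarrow> int) \<Rightarrow> (nat \<Rightarrow> int) set" where
  "graver d n A = {z \<in> kerA d n A. z \<noteq> 0 \<and>
     \<not> (\<exists>u v. u \<in> kerA d n A \<and> v \<in> kerA d n A \<and> u \<noteq> 0 \<and> v \<noteq> 0 \<and>
          z = u + v \<and> pospart z = pospart u + pospart v \<and> negpart z = negpart u + negpart v)}"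

definition reduces_plus :: "nat \<Rightarrow> (nat \<Rightarrow> int) \<Rightarrow> (nat \<Rightarrow> int) \<Rightarrow> bool" where
  "reduces_plus n u z \<longleftrightarrow> (\<exists>\<epsilon>::int. \<epsilon> \<in> {1, -1} \<and>
     natvec (\<lambda>i. pospart z i + \<epsilon> * u i) \<and>
     norm1 n (\<lambda>i. pospart z i + \<epsilon> * u i - negpart z i) < norm1 n z)"

definition reduces_minus :: "nat \<Rightarrow> (nat \<Rightarrow> int) \<Rightarrow> (nat \<Rightarrow> int) \<Rightarrow> bool" where
  "reduces_minus n u z \<longleftrightarrow> (\<exists>\<epsilon>::int. \<epsilon> \<in> {1, -1} \<and>
     natvec (\<lambda>i. negpart z i + \<epsilon> * u i) \<and>
     norm1 n (\<lambda>i. pospart z i - (negpart z i + \<epsilon> * u i)) < norm1 n z)"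

definition reduces_distance :: "nat \<Rightarrow> (nat \<Rightarrow> int) set \<Rightarrow> (nat \<Rightarrow> int) set \<Rightarrow> bool" where
  "reduces_distance n B Z \<longleftrightarrow>
     (\<forall>z\<in>Z. z \<noteq> 0 \<longrightarrow> (\<exists>u\<in>B. reduces_plus n u z \<or> reduces_minus n u z))"

definition strongly_reduces_distance :: "nat \<Rightarrow> (nat \<Rightarrow> int) set \<Rightarrow> (nat \<Rightarrow> int) set \<Rightarrow> bool" where
  "strongly_reduces_distance n B Z \<longleftrightarrow>
     (\<forall>z\<in>Z. z \<noteq> 0 \<longrightarrow> (\<exists>u\<in>B. reduces_plus n u z) \<and> (\<exists>u'\<in>B. reduces_minus n u' z))"

end

theory Submission
  imports Defs
begin

text \<open>Every nonzero
kernel element z is conformal above some Graver element: if z is not in the Graver basis, it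
splits as a conformal sum u + v of nonzero kernel elements, and u has strictly smaller 1-norm,
so the descent terminates. Reduction is inherited upward along the conformal order: if g is
conformal to z then the positive and negative parts of g are bounded by those of z, so adding
\<epsilon>u keeps the parts of z nonnegative whenever it keeps those of g nonnegative, and
\<parallel>z + w\<parallel> - \<parallel>z\<parallel> \<le> \<parallel>g + w\<parallel> - \<parallel>g\<parallel> because the 1-norm is additive on the
conformal sum z = g + (z - g) and subadditive in general.\<close>

definition conformal :: "(nat \<Rightarrow> int) \<Rightarrow> (nat \<Rightarrow> int) \<Rightarrow> bool" where
  "conformal g z \<longleftrightarrow> (\<forall>i. 0 \<le> g i \<and> g i \<le> z i \<or> z i \<le> g i \<and> g i \<le> 0)"

lemma conformal_refl: "conformal z z"
  by (auto simp: conformal_def)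

lemma conformal_trans: "conformal f g \<Longrightarrow> conformal g z \<Longrightarrow> conformal f z"
  unfolding conformal_def by (metis order_trans)

lemma conformal_iff_parts_le:
  "conformal g z \<longleftrightarrow> pospart g \<le> pospart z \<and> negpart g \<le> negpart z"
proof -
  have "(0 \<le> g i \<and> g i \<le> z i \<or> z i \<le> g i \<and> g i \<le> 0) \<longleftrightarrow>
      max (g i) 0 \<le> max (z i) 0 \<and> max (- g i) 0 \<le> max (- z i) 0" for i
    by (auto simp: max_def)
  then show ?thesis
    unfolding conformal_def pospart_def negpart_def le_fun_def by (simp add: all_conj_distrib)
qed

lemma conformal_if_parts_add:
  assumes "pospart z = pospart u + pospart v" and "negpart z = negpart u + negpart v"
  shows "conformal u z"
  unfolding conformal_iff_parts_le assms
  by (auto simp: le_fun_def pospart_def negpart_def)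

lemma norm1_conformal_split:
  assumes "conformal g z"
  shows "norm1 n z = norm1 n g + norm1 n (\<lambda>i. z i - g i)"
proof -
  have "\<bar>z i\<bar> = \<bar>g i\<bar> + \<bar>z i - g i\<bar>" for i
    using assms[unfolded conformal_def, rule_format, of i] by linarith
  then show ?thesis
    unfolding norm1_def by (simp add: sum.distrib)
qed

lemma norm1_add_diff_le_conformal:
  assumes "conformal g z"
  shows "norm1 n (\<lambda>i. z i + w i) - norm1 n z \<le> norm1 n (\<lambda>i. g i + w i) - norm1 n g"
proof -
  have "norm1 n (\<lambda>i. z i + w i) \<le> (\<Sum>i<n. \<bar>g i + w i\<bar> + \<bar>z i - g i\<bar>)"
    unfolding norm1_def by (rule sum_mono) linarith
  also have "\<dots> = norm1 n (\<lambda>i. g i + w i) + norm1 n (\<lambda>i. z i - g i)"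
    unfolding norm1_def by (simp add: sum.distrib)
  finally show ?thesis
    using norm1_conformal_split[OF assms, of n] by linarith
qed

lemma norm1_nonneg: "0 \<le> norm1 n z"
  unfolding norm1_def by (simp add: sum_nonneg)

lemma norm1_pos:
  assumes "z \<in> vecs n" and "z \<noteq> 0"
  shows "0 < norm1 n z"
proof -
  obtain i where i: "z i \<noteq> 0"
    using assms(2) by (auto simp: fun_eq_iff)
  have "i < n"
  proof (rule ccontr)
    assume "\<not> i < n"
    then show False
      using assms(1) i by (simp add: vecs_def)
  qed
  then have "\<bar>z i\<bar> \<le> norm1 n z"
    unfolding norm1_def by (intro member_le_sum) auto
  with i show ?thesis by linarith
qed

lemma not_graver_conformal_split:
  assumes "z \<in> kerA d n A" "z \<noteq> 0" and "z \<notin> graver d n A"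
  shows "\<exists>u\<in>kerA d n A. u \<noteq> 0 \<and> conformal u z \<and> norm1 n u < norm1 n z"
proof -
  obtain u v where u: "u \<in> kerA d n A" "u \<noteq> 0" and v: "v \<in> kerA d n A" "v \<noteq> 0"
    and z_eq: "z = u + v"
    and parts: "pospart z = pospart u + pospart v" "negpart z = negpart u + negpart v"
    using assms by (simp add: graver_def) metis
  have "conformal u z"
    using conformal_if_parts_add[OF parts] .
  moreover have "norm1 n z = norm1 n u + norm1 n v"
    using norm1_conformal_split[OF \<open>conformal u z\<close>, of n] by (simp add: z_eq)
  moreover have "0 < norm1 n v"
    using v unfolding kerA_def by (blast intro: norm1_pos)
  ultimately show ?thesis
    using u by auto
qed

lemma graver_conformal_below:
  assumes "z \<in> kerA d n A" and "z \<noteq> 0"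
  shows "\<exists>g\<in>graver d n A. conformal g z"
  using assms
proof (induction "nat (norm1 n z)" arbitrary: z rule: less_induct)
  case less
  show ?case
  proof (cases "z \<in> graver d n A")
    case True
    then show ?thesis
      using conformal_refl by blast
  next
    case False
    then obtain u where u: "u \<in> kerA d n A" "u \<noteq> 0" "conformal u z" "norm1 n u < norm1 n z"
      using not_graver_conformal_split less.prems by blast
    then have "nat (norm1 n u) < nat (norm1 n z)"
      using norm1_nonneg[of n u] by linarith
    then obtain g where "g \<in> graver d n A" "conformal g u"
      using less.hyps u(1,2) by blast
    then show ?thesis
      using conformal_trans u(3) by blast
  qed
qed

lemma reduces_plus_iff:
  "reduces_plus n u z \<longleftrightarrow> (\<exists>\<epsilon>::int. \<epsilon> \<in> {1, -1} \<and>
     natvec (\<lambda>i. pospart z i + \<epsilon> * u i) \<and> norm1 n (\<lambda>i. z i + \<epsilon> * u i) < norm1 n z)"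
proof -
  have "(\<lambda>i. pospart z i + w i - negpart z i) = (\<lambda>i. z i + w i)" for w
    by (auto simp: fun_eq_iff pospart_def negpart_def max_def)
  then show ?thesis
    unfolding reduces_plus_def by simp
qed

lemma reduces_minus_iff:
  "reduces_minus n u z \<longleftrightarrow> (\<exists>\<epsilon>::int. \<epsilon> \<in> {1, -1} \<and>
     natvec (\<lambda>i. negpart z i + \<epsilon> * u i) \<and> norm1 n (\<lambda>i. z i + - (\<epsilon> * u i)) < norm1 n z)"
proof -
  have "(\<lambda>i. pospart z i - (negpart z i + w i)) = (\<lambda>i. z i + - w i)" for w
    by (auto simp: fun_eq_iff pospart_def negpart_def max_def)
  then show ?thesis
    unfolding reduces_minus_def by simp
qed

lemma natvec_add_mono: "natvec (\<lambda>i. x i + w i) \<Longrightarrow> x \<le> y \<Longrightarrow> natvec (\<lambda>i. y i + w i)"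
  unfolding natvec_def le_fun_def by (metis add_right_mono order_trans)

lemma reduces_plus_conformal_mono:
  assumes "conformal g z" and "reduces_plus n u g"
  shows "reduces_plus n u z"
proof -
  obtain \<epsilon> :: int where \<epsilon>: "\<epsilon> \<in> {1, -1}" "natvec (\<lambda>i. pospart g i + \<epsilon> * u i)"
    "norm1 n (\<lambda>i. g i + \<epsilon> * u i) < norm1 n g"
    using assms(2) unfolding reduces_plus_iff by blast
  have "natvec (\<lambda>i. pospart z i + \<epsilon> * u i)"
    using natvec_add_mono[OF \<epsilon>(2)] assms(1) unfolding conformal_iff_parts_le by blast
  moreover have "norm1 n (\<lambda>i. z i + \<epsilon> * u i) < norm1 n z"
    using norm1_add_diff_le_conformal[OF assms(1), of n "\<lambda>i. \<epsilon> * u i"] \<epsilon>(3) by linarith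
  ultimately show ?thesis
    using \<epsilon>(1) unfolding reduces_plus_iff by blast
qed

lemma reduces_minus_conformal_mono:
  assumes "conformal g z" and "reduces_minus n u g"
  shows "reduces_minus n u z"
proof -
  obtain \<epsilon> :: int where \<epsilon>: "\<epsilon> \<in> {1, -1}" "natvec (\<lambda>i. negpart g i + \<epsilon> * u i)"
    "norm1 n (\<lambda>i. g i + - (\<epsilon> * u i)) < norm1 n g"
    using assms(2) unfolding reduces_minus_iff by blast
  have "natvec (\<lambda>i. negpart z i + \<epsilon> * u i)"
    using natvec_add_mono[OF \<epsilon>(2)] assms(1) unfolding conformal_iff_parts_le by blast
  moreover have "norm1 n (\<lambda>i. z i + - (\<epsilon> * u i)) < norm1 n z"
    using norm1_add_diff_le_conformal[OF assms(1), of n "\<lambda>i. - (\<epsilon> * u i)"] \<epsilon>(3) by linarith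
  ultimately show ?thesis
    using \<epsilon>(1) unfolding reduces_minus_iff by blast
qed

lemma graver_subset_kerA: "graver d n A \<subseteq> kerA d n A"
  unfolding graver_def by blast

lemma zero_notin_graver: "0 \<notin> graver d n A"
  unfolding graver_def by blast

lemma reduces_distance_subset:
  "Z' \<subseteq> Z \<Longrightarrow> reduces_distance n B Z \<Longrightarrow> reduces_distance n B Z'"
  unfolding reduces_distance_def by blast

lemma strongly_reduces_distance_subset:
  "Z' \<subseteq> Z \<Longrightarrow> strongly_reduces_distance n B Z \<Longrightarrow> strongly_reduces_distance n B Z'"
  unfolding strongly_reduces_distance_def by blast

lemma reduces_distance_kerA_if_graver:
  assumes "reduces_distance n B (graver d n A)"
  shows "reduces_distance n B (kerA d n A)"
  unfolding reduces_distance_def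
proof (intro ballI impI)
  fix z assume "z \<in> kerA d n A" "z \<noteq> 0"
  then obtain g where g: "g \<in> graver d n A" "conformal g z"
    using graver_conformal_below by blast
  then obtain u where "u \<in> B" "reduces_plus n u g \<or> reduces_minus n u g"
    using assms zero_notin_graver unfolding reduces_distance_def by metis
  then show "\<exists>u\<in>B. reduces_plus n u z \<or> reduces_minus n u z"
    using g(2) reduces_plus_conformal_mono reduces_minus_conformal_mono by blast
qed

lemma strongly_reduces_distance_kerA_if_graver:
  assumes "strongly_reduces_distance n B (graver d n A)"
  shows "strongly_reduces_distance n B (kerA d n A)"
  unfolding strongly_reduces_distance_def
proof (intro ballI impI)
  fix z assume "z \<in> kerA d n A" "z \<noteq> 0"
  then obtain g where g: "g \<in> graver d n A" "conformal g z"
    using graver_conformal_below by blast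
  then obtain u u' where "u \<in> B" "reduces_plus n u g" "u' \<in> B" "reduces_minus n u' g"
    using assms zero_notin_graver unfolding strongly_reduces_distance_def by metis
  then show "(\<exists>u\<in>B. reduces_plus n u z) \<and> (\<exists>u'\<in>B. reduces_minus n u' z)"
    using g(2) reduces_plus_conformal_mono reduces_minus_conformal_mono by blast
qed

theorem theorem7p4:
  fixes d n :: nat and A :: "nat \<Rightarrow> nat \<Rightarrow> int" and B :: "(nat \<Rightarrow> int) set"
  assumes pointed: "\<forall>z\<in>kerA d n A. natvec z \<longrightarrow> z = 0"
    and B: "B \<subseteq> kerA d n A"
  shows "(reduces_distance n B (kerA d n A) \<longleftrightarrow> reduces_distance n B (graver d n A))
       \<and> (strongly_reduces_distance n B (kerA d n A) \<longleftrightarrow> strongly_reduces_distance n B (graver d n A))"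
proof (intro conjI iffI)
  show "reduces_distance n B (kerA d n A)" if "reduces_distance n B (graver d n A)"
    using reduces_distance_kerA_if_graver[OF that] .
  show "reduces_distance n B (graver d n A)" if "reduces_distance n B (kerA d n A)"
    using reduces_distance_subset[OF graver_subset_kerA that] .
  show "strongly_reduces_distance n B (kerA d n A)" if "strongly_reduces_distance n B (graver d n A)"
    using strongly_reduces_distance_kerA_if_graver[OF that] .
  show "strongly_reduces_distance n B (graver d n A)" if "strongly_reduces_distance n B (kerA d n A)"
    using strongly_reduces_distance_subset[OF graver_subset_kerA that] .
qed

end
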